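(* Let $\Theta\sim U[0,1]$ and let $T^{2,1,3/2,\Theta}$ be the random policy with $T^{2,1,3/2,\Theta}_i=\mathcal{R}^{3/2}_{2,1,\Theta}(T_i^* )$ for $i\in[n]$. Then $T^{2,1,3/2,\Theta}$ is resource-feasible with probability 1 and $\mathbb{E}_\Theta[F(T^{2,1,3/2,\Theta})]\le\frac{5}{6\ln 2}\cdot\mathrm{OPT}(P)$.
   Context: An instance consists of integers $n\ge 1$, $D\ge 1$; a joint ordering cost $K_0>0$; for each commodity $i\in[n]$ an ordering cost $K_i>0$ and a holding coefficient $H_i>0$; and resource coefficients $\alpha_{id}\ge 0$. A policy is $T=(T_1,\dots,T_n)\in\mathbb{R}_{>0}^n$; it is resource-feasible if $\sum_{i}\alpha_{id}/T_i\le 1$ for every $d\in[D]$. For $g>0$, $\Delta\ge 0$, $\mathcal{M}_{g,\Delta}=\{0,g,\dots,\lfloor\Delta/g\rfloor g\}$; $N(T,\Delta)=|\bigcup_{i}\mathcal{M}_{T_i,\Delta}|$; $J(T)=K_0\limsup_{\Delta\to\infty}N(T,\Delta)/\Delta$; $F(T)=J(T)+\sum_i(K_i/T_i+H_iT_i)$. The convex relaxation (P) is: minimize $K_0/T_{\min}+\sum_{i\in[n]}(K_i/T_i+H_iT_i)$ over $(T_{\min},T_1,\dots,T_n)$ subject to $T_i\ge T_{\min}\ge0$ for all $i$ and $\sum_i\alpha_{id}/T_i\le1$ for all $d$. $\mathrm{OPT}(P)$ is its optimal value and $T^*=(T^*_{\min},T^*_1,\dots,T^*_n)$ is a fixed optimal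 solution (with $T^*_{\min}>0$). For $\theta\in[0,1]$: $\mathcal{H}^{3/2}_{2,1,\theta}=\{2^{p+\theta}T^*_{\min}:p\in\mathbb{Z}\}\cup\{\tfrac32\cdot2^{p+\theta}T^*_{\min}:p\in\mathbb{Z}\}$ and $\mathcal{R}^{3/2}_{2,1,\theta}(t)=\min\{g\in\mathcal{H}^{3/2}_{2,1,\theta}:g>t\}$ for $t>0$. *)

theory Defs
  imports "HOL-Probability.Probability"
begin

text \<open>Commodities are indexed by i < n, resources by d < D.
  A policy is a function T :: nat => real (only the values at i < n matter).\<close>

definition resource_feasible ::
  "nat \<Rightarrow> nat \<Rightarrow> (nat \<Rightarrow> nat \<Rightarrow> real) \<Rightarrow> (nat \<Rightarrow> real) \<Rightarrow> bool" where
  "resource_feasible n D \<alpha> T \<longleftrightarrow>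
     (\<forall>i<n. 0 < T i) \<and> (\<forall>d<D. (\<Sum>i<n. \<alpha> i d / T i) \<le> 1)"

definition multiples :: "real \<Rightarrow> real \<Rightarrow> real set" where
  "multiples g \<Delta> = {real k * g | k::nat. k \<le> nat \<lfloor>\<Delta> / g\<rfloor>}"

definition Ncount :: "nat \<Rightarrow> (nat \<Rightarrow> real) \<Rightarrow> real \<Rightarrow> nat" where
  "Ncount n T \<Delta> = card (\<Union>i<n. multiples (T i) \<Delta>)"

definition Jcost :: "nat \<Rightarrow> real \<Rightarrow> (nat \<Rightarrow> real) \<Rightarrow> real" where
  "Jcost n K0 T = K0 * real_of_ereal
     (Limsup at_top (\<lambda>\<Delta>::real. ereal (real (Ncount n T \<Delta>) / \<Delta>)))"

definition Fcost :: "nat \<Rightarrow> real \<Rightarrow> (nat \<Rightarrow> real) \<Rightarrow> (nat \<Rightarrow> real) \<Rightarrow> (nat \<Rightarrow> real) \<Rightarrow> real" where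
  "Fcost n K0 K H T = Jcost n K0 T + (\<Sum>i<n. K i / T i + H i * T i)"

text \<open>Relaxation (P). Since K0 > 0, K0/Tmin is +infinity at Tmin = 0,
  so feasible points with finite objective have Tmin > 0.\<close>

definition P_feasible :: "nat \<Rightarrow> nat \<Rightarrow> (nat \<Rightarrow> nat \<Rightarrow> real) \<Rightarrow> real \<Rightarrow> (nat \<Rightarrow> real) \<Rightarrow> bool" where
  "P_feasible n D \<alpha> Tmin T \<longleftrightarrow>
     0 < Tmin \<and> (\<forall>i<n. Tmin \<le> T i) \<and> (\<forall>d<D. (\<Sum>i<n. \<alpha> i d / T i) \<le> 1)"

definition P_obj :: "nat \<Rightarrow> real \<Rightarrow> (nat \<Rightarrow> real) \<Rightarrow> (nat \<Rightarrow> real) \<Rightarrow> real \<Rightarrow> (nat \<Rightarrow> real) \<Rightarrow> real" where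
  "P_obj n K0 K H Tmin T = K0 / Tmin + (\<Sum>i<n. K i / T i + H i * T i)"

definition OPT_P :: "nat \<Rightarrow> nat \<Rightarrow> real \<Rightarrow> (nat \<Rightarrow> real) \<Rightarrow> (nat \<Rightarrow> real) \<Rightarrow> (nat \<Rightarrow> nat \<Rightarrow> real) \<Rightarrow> real" where
  "OPT_P n D K0 K H \<alpha> =
     Inf {P_obj n K0 K H Tmin T | Tmin T. P_feasible n D \<alpha> Tmin T}"

definition P_optimal :: "nat \<Rightarrow> nat \<Rightarrow> real \<Rightarrow> (nat \<Rightarrow> real) \<Rightarrow> (nat \<Rightarrow> real) \<Rightarrow> (nat \<Rightarrow> nat \<Rightarrow> real)
    \<Rightarrow> real \<Rightarrow> (nat \<Rightarrow> real) \<Rightarrow> bool" where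
  "P_optimal n D K0 K H \<alpha> Tmin T \<longleftrightarrow>
     P_feasible n D \<alpha> Tmin T \<and>
     (\<forall>Tmin' T'. P_feasible n D \<alpha> Tmin' T' \<longrightarrow> P_obj n K0 K H Tmin T \<le> P_obj n K0 K H Tmin' T')"

definition grid :: "real \<Rightarrow> real \<Rightarrow> real set" where
  "grid Tmin \<theta> = {2 powr (real_of_int p + \<theta>) * Tmin | p::int. True}
                 \<union> {3/2 * 2 powr (real_of_int p + \<theta>) * Tmin | p::int. True}"

definition round_up :: "real \<Rightarrow> real \<Rightarrow> real \<Rightarrow> real" where
  "round_up Tmin \<theta> t = Inf {g \<in> grid Tmin \<theta>. g > t}"

end

theory Submission
  imports Defs
begin

text \<open>Write t = Tmin * 2 powr (\<theta> + x). The grid is Tmin * 2 powr \<theta> * 2 powr y with y ranging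
  over \<int> \<union> (\<int> + log 2 (3/2)), so rounding up multiplies t by the overshoot factor
  2 powr (y(x) - x), where y(x) is the next grid exponent above x. This factor is 1-periodic in \<theta>,
  and over one period it averages to ((4/3 - 1) + (3/2 - 1)) / ln 2 = 5 / (6 ln 2); ordering costs
  and resource consumption only decrease.

  All rounded periods exceed Tmin, so with A = Tmin * 2 powr \<theta> they are integer multiples of A or of
  3/2 * A (if \<theta> \<le> 1 - log 2 (3/2)), resp. 3/4 * A (otherwise). Both lattices contain 3 * A, so by
  inclusion-exclusion the ordering times have density at most (4/3 resp. 2) * 2 powr (-\<theta>) / Tmin,
  which again averages to 5 / (6 ln 2) / Tmin. Finally 5 / (6 ln 2) \<ge> 1 because
  ln 2 = ln (4/3) + ln (3/2) \<le> 1/3 + 1/2.\<close>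

definition mid_exponent :: real where "mid_exponent = log 2 (3/2)"

lemma mid_exponent_gt_0: "0 < mid_exponent"
  and mid_exponent_lt_1: "mid_exponent < 1"
  unfolding mid_exponent_def by (simp_all add: log_less_one_cancel_iff)

lemma powr_mid_exponent: "2 powr mid_exponent = 3/2"
  and powr_1_minus_mid_exponent: "2 powr (1 - mid_exponent) = 4/3"
  by (simp_all add: mid_exponent_def powr_diff)

definition grid_exponents :: "real set" where
  "grid_exponents = range real_of_int \<union> range (\<lambda>p. real_of_int p + mid_exponent)"

lemma grid_eq_image: "grid Tmin \<theta> = (\<lambda>y. Tmin * 2 powr (\<theta> + y)) ` grid_exponents"
proof -
  have "2 powr (real_of_int p + \<theta>) * Tmin = Tmin * 2 powr (\<theta> + real_of_int p)"
    and "3/2 * 2 powr (real_of_int p + \<theta>) * Tmin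
      = Tmin * 2 powr (\<theta> + (real_of_int p + mid_exponent))" for p
    by (simp_all add: powr_add powr_mid_exponent ac_simps)
  then show ?thesis
    unfolding grid_def grid_exponents_def image_Un image_image
    by (simp only: full_SetCompr_eq simp_thms)
qed

definition next_exponent :: "real \<Rightarrow> real" where
  "next_exponent x = real_of_int \<lfloor>x\<rfloor> + (if frac x < mid_exponent then mid_exponent else 1)"

lemma next_exponent_in_grid_exponents: "next_exponent x \<in> grid_exponents"
  unfolding next_exponent_def grid_exponents_def
  by (cases "frac x < mid_exponent") (auto intro: range_eqI[of _ _ "\<lfloor>x\<rfloor> + 1"])

lemma next_exponent_gt: "x < next_exponent x"
  using frac_lt_1[of x] unfolding next_exponent_def frac_def by auto

lemma next_exponent_le: "next_exponent x \<le> x + 1"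
  using mid_exponent_lt_1 unfolding next_exponent_def by (auto intro!: add_mono)

lemma next_exponent_least:
  assumes "y \<in> grid_exponents" and "x < y"
  shows "next_exponent x \<le> y"
proof -
  consider p where "y = real_of_int p" | p where "y = real_of_int p + mid_exponent"
    using assms(1) unfolding grid_exponents_def by blast
  then show ?thesis
  proof cases
    case 1
    have "\<lfloor>x\<rfloor> + 1 \<le> p" using assms(2) unfolding 1 by linarith
    then have "real_of_int \<lfloor>x\<rfloor> + 1 \<le> y" unfolding 1 by linarith
    then show ?thesis using mid_exponent_lt_1 unfolding next_exponent_def by auto
  next
    case 2
    show ?thesis
    proof (cases "frac x < mid_exponent")
      case True
      then have "\<lfloor>x\<rfloor> \<le> p" using assms(2) mid_exponent_lt_1 unfolding 2 by linarith
      then show ?thesis using True unfolding next_exponent_def 2 by simp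
    next
      case False
      then have "\<lfloor>x\<rfloor> + 1 \<le> p" using assms(2) unfolding 2 frac_def by linarith
      then have "real_of_int \<lfloor>x\<rfloor> + 1 \<le> p" by linarith
      then show ?thesis using False mid_exponent_gt_0 unfolding next_exponent_def 2 by simp
    qed
  qed
qed

lemma next_exponent_minus_1: "next_exponent (x - 1) = next_exponent x - 1"
  unfolding next_exponent_def frac_def by simp

lemma next_exponent_eq_int:
  assumes "real_of_int k - 1 + mid_exponent \<le> x" and "x < real_of_int k"
  shows "next_exponent x = real_of_int k"
proof -
  have "\<lfloor>x\<rfloor> = k - 1" using assms mid_exponent_gt_0 by (simp add: floor_eq_iff)
  then show ?thesis using assms unfolding next_exponent_def frac_def by simp
qed

lemma next_exponent_eq_shifted:
  assumes "real_of_int k \<le> x" and "x < real_of_int k + mid_exponent"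
  shows "next_exponent x = real_of_int k + mid_exponent"
proof -
  have "\<lfloor>x\<rfloor> = k" using assms mid_exponent_lt_1 by (simp add: floor_eq_iff)
  then show ?thesis using assms unfolding next_exponent_def frac_def by simp
qed

lemma borel_measurable_next_exponent [measurable]: "next_exponent \<in> borel_measurable borel"
  unfolding next_exponent_def frac_def by measurable

lemma round_up_eq:
  assumes "0 < Tmin" and "0 < t"
  shows "round_up Tmin \<theta> t = Tmin * 2 powr (\<theta> + next_exponent (log 2 (t / Tmin) - \<theta>))"
proof -
  define x where "x = log 2 (t / Tmin) - \<theta>"
  let ?e = "\<lambda>y. Tmin * 2 powr (\<theta> + y)"
  have e_less: "?e y < ?e z \<longleftrightarrow> y < z" for y z using assms(1) by simp
  have "t = ?e x" unfolding x_def using assms by simp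
  then have "{g \<in> grid Tmin \<theta>. t < g} = ?e ` {y \<in> grid_exponents. x < y}"
    unfolding grid_eq_image by (auto simp: e_less)
  also have "Inf \<dots> = ?e (next_exponent x)"
  proof (rule cInf_eq_minimum)
    show "?e (next_exponent x) \<in> ?e ` {y \<in> grid_exponents. x < y}"
      using next_exponent_in_grid_exponents next_exponent_gt by blast
  next
    fix g assume "g \<in> ?e ` {y \<in> grid_exponents. x < y}"
    then show "?e (next_exponent x) \<le> g"
      using next_exponent_least e_less by (auto simp: not_less[symmetric])
  qed
  finally show ?thesis unfolding round_up_def x_def .
qed

lemma round_up_eq_overshoot:
  assumes "0 < Tmin" and "0 < t"
  shows "round_up Tmin \<theta> t
    = t * 2 powr (next_exponent (log 2 (t / Tmin) - \<theta>) - (log 2 (t / Tmin) - \<theta>))"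
proof -
  define x where "x = log 2 (t / Tmin) - \<theta>"
  have "t * 2 powr (next_exponent x - x)
      = Tmin * 2 powr (\<theta> + x) * 2 powr (next_exponent x - x)"
    unfolding x_def using assms by simp
  also have "\<dots> = Tmin * 2 powr (\<theta> + next_exponent x)"
    by (simp add: mult.assoc flip: powr_add)
  finally show ?thesis using round_up_eq[OF assms] unfolding x_def by simp
qed

lemma round_up_gt: "0 < Tmin \<Longrightarrow> 0 < t \<Longrightarrow> t < round_up Tmin \<theta> t"
  using next_exponent_gt[of "log 2 (t / Tmin) - \<theta>"] by (simp add: round_up_eq_overshoot)

lemma round_up_le_double: "0 < Tmin \<Longrightarrow> 0 < t \<Longrightarrow> round_up Tmin \<theta> t \<le> 2 * t"
  using next_exponent_le[of "log 2 (t / Tmin) - \<theta>"] 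
    powr_mono[of "next_exponent (log 2 (t / Tmin) - \<theta>) - (log 2 (t / Tmin) - \<theta>)" 1 2]
  by (simp add: round_up_eq_overshoot)

lemma multiples_eq_image: "multiples g \<Delta> = (\<lambda>k. real k * g) ` {..nat \<lfloor>\<Delta> / g\<rfloor>}"
  unfolding multiples_def by auto

lemma finite_multiples [simp]: "finite (multiples g \<Delta>)"
  unfolding multiples_eq_image by simp

lemma card_multiples: "g \<noteq> 0 \<Longrightarrow> card (multiples g \<Delta>) = Suc (nat \<lfloor>\<Delta> / g\<rfloor>)"
  unfolding multiples_eq_image by (subst card_image) (auto simp: inj_on_def)

lemma card_multiples_bounds:
  assumes "0 < g" and "0 \<le> \<Delta>"
  shows "\<Delta> / g \<le> real (card (multiples g \<Delta>))"
    and "real (card (multiples g \<Delta>)) \<le> \<Delta> / g + 1"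
proof -
  have "real (card (multiples g \<Delta>)) = real_of_int \<lfloor>\<Delta> / g\<rfloor> + 1"
    using assms by (simp add: card_multiples)
  then show "\<Delta> / g \<le> real (card (multiples g \<Delta>))"
    and "real (card (multiples g \<Delta>)) \<le> \<Delta> / g + 1"
    by linarith+
qed

lemma multiples_subset_multiples:
  assumes "0 < g" and "0 \<le> \<Delta>"
  shows "multiples (real m * g) \<Delta> \<subseteq> multiples g \<Delta>"
proof
  fix x assume "x \<in> multiples (real m * g) \<Delta>"
  then obtain k where "x = real k * (real m * g)" and k: "k \<le> nat \<lfloor>\<Delta> / (real m * g)\<rfloor>"
    unfolding multiples_def by auto
  then have x: "x = real (k * m) * g" by simp
  have "real (k * m) * g \<le> \<Delta>"
  proof (cases "m = 0")
    case False
    then have "real k \<le> \<Delta> / (real m * g)" using k assms by (simp add: le_nat_iff le_floor_iff)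
    then show ?thesis using False assms by (simp add: pos_le_divide_eq ac_simps)
  qed (use assms in simp)
  then have "k * m \<le> nat \<lfloor>\<Delta> / g\<rfloor>"
    using assms by (intro le_nat_floor) (simp add: pos_le_divide_eq)
  then show "x \<in> multiples g \<Delta>" unfolding multiples_def x by blast
qed

lemma Ncount_le_two_lattices:
  assumes "0 < p" and "0 < q" and "0 < r" and common: "real r * p = real s * q"
    and multiple: "\<And>i. i < n \<Longrightarrow> \<exists>m::nat. T i = real m * p \<or> T i = real m * q"
    and "0 \<le> \<Delta>"
  shows "real (Ncount n T \<Delta>) \<le> (1/p + 1/q - 1/(real r * p)) * \<Delta> + 2"
proof -
  let ?Mp = "multiples p \<Delta>" and ?Mq = "multiples q \<Delta>" and ?Ml = "multiples (real r * p) \<Delta>"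
  have "multiples (T i) \<Delta> \<subseteq> ?Mp \<union> ?Mq" if i: "i < n" for i
  proof -
    obtain m where "T i = real m * p \<or> T i = real m * q" using multiple[OF i] by blast
    then show ?thesis
      using multiples_subset_multiples[of p \<Delta> m] multiples_subset_multiples[of q \<Delta> m] assms
      by auto
  qed
  then have "Ncount n T \<Delta> \<le> card (?Mp \<union> ?Mq)"
    unfolding Ncount_def by (intro card_mono) auto
  moreover have "card ?Ml \<le> card (?Mp \<inter> ?Mq)"
  proof (rule card_mono)
    show "?Ml \<subseteq> ?Mp \<inter> ?Mq"
      using multiples_subset_multiples[of p \<Delta> r] multiples_subset_multiples[of q \<Delta> s] assms
      unfolding common by blast
  qed simp
  moreover have "card ?Mp + card ?Mq = card (?Mp \<union> ?Mq) + card (?Mp \<inter> ?Mq)"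
    by (rule card_Un_Int) simp_all
  ultimately have "real (Ncount n T \<Delta>) + real (card ?Ml) \<le> real (card ?Mp) + real (card ?Mq)"
    by (simp only: of_nat_add[symmetric] of_nat_le_iff)
  moreover have "\<Delta> / (real r * p) \<le> real (card ?Ml)"
    using card_multiples_bounds(1)[of "real r * p" \<Delta>] assms(1,3,6) by simp
  ultimately have "real (Ncount n T \<Delta>) \<le> (\<Delta> / p + 1) + (\<Delta> / q + 1) - \<Delta> / (real r * p)"
    using card_multiples_bounds(2)[of p \<Delta>] card_multiples_bounds(2)[of q \<Delta>] assms by linarith
  then show ?thesis by (simp add: algebra_simps)
qed

lemma Limsup_Ncount_nonneg: "0 \<le> Limsup at_top (\<lambda>\<Delta>::real. ereal (real (Ncount n T \<Delta>) / \<Delta>))"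
  by (rule le_Limsup[OF trivial_limit_at_top_linorder])
    (auto intro!: eventually_mono[OF eventually_gt_at_top[of 0]])

lemma Jcost_nonneg: "0 \<le> K0 \<Longrightarrow> 0 \<le> Jcost n K0 T"
  using Limsup_Ncount_nonneg[of n T] unfolding Jcost_def by (simp add: real_of_ereal_pos)

lemma Jcost_le:
  assumes "0 \<le> K0" and linear: "\<forall>\<^sub>F \<Delta> in at_top. real (Ncount n T \<Delta>) \<le> c * \<Delta> + b"
  shows "Jcost n K0 T \<le> K0 * c"
proof -
  let ?f = "\<lambda>\<Delta>::real. ereal (real (Ncount n T \<Delta>) / \<Delta>)"
  have "\<forall>\<^sub>F \<Delta> in at_top. ?f \<Delta> \<le> ereal (c + b / \<Delta>)"
    using linear eventually_gt_at_top[of 0] by eventually_elim (simp add: field_simps)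
  moreover have "((\<lambda>\<Delta>::real. b / \<Delta>) \<longlongrightarrow> 0) at_top"
    by (intro tendsto_divide_0[OF tendsto_const] filterlim_at_top_imp_at_infinity filterlim_ident)
  then have "((\<lambda>\<Delta>::real. ereal (c + b / \<Delta>)) \<longlongrightarrow> ereal c) at_top"
    unfolding lim_ereal using tendsto_add[OF tendsto_const[of c]] by fastforce
  ultimately have "Limsup at_top ?f \<le> ereal c"
    using Limsup_mono lim_imp_Limsup[OF trivial_limit_at_top_linorder] by metis
  then have "real_of_ereal (Limsup at_top ?f) \<le> c"
    using Limsup_Ncount_nonneg[of n T] by (cases "Limsup at_top ?f") auto
  then show ?thesis unfolding Jcost_def using assms(1) by (simp add: mult_left_mono)
qed

lemma Jcost_le_two_lattices:
  assumes "0 \<le> K0" and "0 < p" and "0 < q" and "0 < r" and "real r * p = real s * q"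
    and "\<And>i. i < n \<Longrightarrow> \<exists>m::nat. T i = real m * p \<or> T i = real m * q"
  shows "Jcost n K0 T \<le> K0 * (1/p + 1/q - 1/(real r * p))"
proof (rule Jcost_le[OF assms(1)])
  show "\<forall>\<^sub>F \<Delta> in at_top. real (Ncount n T \<Delta>) \<le> (1/p + 1/q - 1/(real r * p)) * \<Delta> + 2"
    using eventually_ge_at_top[of 0] by eventually_elim (rule Ncount_le_two_lattices[OF assms(2-)])
qed

lemma Jcost_cong: "(\<And>i. i < n \<Longrightarrow> T i = T' i) \<Longrightarrow> Jcost n K0 T = Jcost n K0 T'"
  unfolding Jcost_def Ncount_def by simp

lemma Ncount_scale:
  assumes "c \<noteq> 0"
  shows "Ncount n (\<lambda>i. c * T i) \<Delta> = Ncount n T (\<Delta> / c)"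
proof -
  have "multiples (c * g) \<Delta> = (\<lambda>x. c * x) ` multiples g (\<Delta> / c)" for g
    unfolding multiples_eq_image image_image by (simp add: ac_simps)
  then have "(\<Union>i<n. multiples (c * T i) \<Delta>) = (\<lambda>x. c * x) ` (\<Union>i<n. multiples (T i) (\<Delta> / c))"
    by (simp add: image_UN)
  moreover have "inj_on (\<lambda>x::real. c * x) A" for A using assms by (auto simp: inj_on_def)
  ultimately show ?thesis unfolding Ncount_def by (simp add: card_image)
qed

lemma filtermap_divide_at_top:
  assumes "0 < (c::real)"
  shows "filtermap (\<lambda>x. x / c) at_top = at_top"
proof (rule filtermap_fun_inverse[where g = "\<lambda>y. c * y"])
  show "filterlim (\<lambda>y. c * y) at_top at_top"
    using filterlim_tendsto_pos_mult_at_top[OF tendsto_const assms filterlim_ident] .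
  have "filterlim (\<lambda>y. inverse c * y) at_top at_top"
    using filterlim_tendsto_pos_mult_at_top[OF tendsto_const _ filterlim_ident] assms by simp
  then show "filterlim (\<lambda>x. x / c) at_top at_top" by (simp add: divide_inverse mult.commute)
  show "\<forall>\<^sub>F x in at_top. c * x / c = x" using assms by simp
qed

lemma Jcost_scale:
  assumes "0 < c"
  shows "Jcost n K0 (\<lambda>i. c * T i) = Jcost n K0 T / c"
proof -
  let ?g = "\<lambda>\<Delta>::real. ereal (real (Ncount n T \<Delta>) / \<Delta>)"
  have "(\<lambda>\<Delta>. ereal (real (Ncount n (\<lambda>i. c * T i) \<Delta>) / \<Delta>))
      = (\<lambda>\<Delta>. ereal (1 / c) * ?g (\<Delta> / c))"
    using assms by (simp add: Ncount_scale)
  moreover have "Limsup at_top (\<lambda>\<Delta>. ?g (\<Delta> / c)) = Limsup at_top ?g"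
    using Limsup_filtermap_eq[of "\<lambda>\<Delta>. \<Delta> / c" at_top ?g] filtermap_divide_at_top[OF assms] assms
    by (simp add: inj_def)
  moreover have "Limsup at_top (\<lambda>\<Delta>. ereal (1 / c) * ?g (\<Delta> / c))
      = ereal (1 / c) * Limsup at_top (\<lambda>\<Delta>. ?g (\<Delta> / c))"
    using assms by (intro Limsup_ereal_mult_left) auto
  ultimately show ?thesis unfolding Jcost_def by simp
qed

lemma borel_measurable_countable_valued_policy:
  fixes \<Phi> :: "(nat \<Rightarrow> real) \<Rightarrow> real" and v :: "'a \<Rightarrow> nat \<Rightarrow> real"
  assumes "countable S"
    and in_S: "\<And>x i. x \<in> space M \<Longrightarrow> i < n \<Longrightarrow> v x i \<in> S"
    and meas: "\<And>i. i < n \<Longrightarrow> (\<lambda>x. v x i) \<in> borel_measurable M"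
    and cong: "\<And>w w'. (\<And>i. i < n \<Longrightarrow> w i = w' i) \<Longrightarrow> \<Phi> w = \<Phi> w'"
  shows "(\<lambda>x. \<Phi> (v x)) \<in> borel_measurable M"
proof -
  define I where "I = PiE {..<n} (\<lambda>_. S)"
  define g where "g x = restrict (v x) {..<n}" for x
  have I: "countable I" unfolding I_def using assms(1) by (intro countable_PiE) auto
  have "g \<in> measurable M (count_space I)"
    unfolding measurable_count_space_eq_countable[OF I]
  proof (intro conjI ballI)
    show "g \<in> space M \<rightarrow> I" using in_S unfolding g_def I_def by auto
    fix w assume "w \<in> I"
    then have "g -` {w} \<inter> space M = {x \<in> space M. \<forall>i\<in>{..<n}. v x i = w i}"
      unfolding g_def I_def by (auto simp: PiE_iff extensional_def fun_eq_iff)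
    also have "\<dots> \<in> sets M"
      using meas by (intro sets.sets_Collect_finite_All pred_eq_const1[unfolded pred_def]) auto
    finally show "g -` {w} \<inter> space M \<in> sets M" .
  qed
  then have "(\<lambda>x. \<Phi> (g x)) \<in> borel_measurable M"
    using measurable_compose_countable'[of I "\<lambda>w x. \<Phi> w" M borel g] I by simp
  moreover have "\<Phi> (g x) = \<Phi> (v x)" for x unfolding g_def by (rule cong) simp
  ultimately show ?thesis by simp
qed

lemma countable_grid_exponents: "countable grid_exponents"
  unfolding grid_exponents_def by simp

lemma borel_measurable_round_up:
  assumes "0 < Tmin" and "0 < t"
  shows "(\<lambda>\<theta>. round_up Tmin \<theta> t) \<in> borel_measurable borel"
  unfolding round_up_eq[OF assms] by measurable

lemma borel_measurable_Fcost_round_up: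
  assumes "0 < Tmin" and t: "\<And>i. i < n \<Longrightarrow> 0 < t i"
  shows "(\<lambda>\<theta>. Fcost n K0 K H (\<lambda>i. round_up Tmin \<theta> (t i))) \<in> borel_measurable borel"
proof -
  define u where "u i = log 2 (t i / Tmin)" for i
  have "Jcost n K0 (\<lambda>i. round_up Tmin \<theta> (t i))
      = Jcost n K0 (\<lambda>i. (Tmin * 2 powr \<theta>) * 2 powr next_exponent (u i - \<theta>))" for \<theta>
    by (rule Jcost_cong) (simp add: round_up_eq[OF assms(1) t] u_def powr_add)
  also have "\<dots> \<theta> = Jcost n K0 (\<lambda>i. 2 powr next_exponent (u i - \<theta>)) / (Tmin * 2 powr \<theta>)"
    for \<theta>
    using assms(1) by (intro Jcost_scale) simp
  finally have J: "Jcost n K0 (\<lambda>i. round_up Tmin \<theta> (t i))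
      = Jcost n K0 (\<lambda>i. 2 powr next_exponent (u i - \<theta>)) / (Tmin * 2 powr \<theta>)" for \<theta> .
  \<comment> \<open>Once the common scale is factored out, the policy takes only countably many values.\<close>
  have "(\<lambda>\<theta>. Jcost n K0 (\<lambda>i. 2 powr next_exponent (u i - \<theta>))) \<in> borel_measurable borel"
    by (rule borel_measurable_countable_valued_policy[where S = "(\<lambda>y. 2 powr y) ` grid_exponents"])
      (auto simp: countable_grid_exponents next_exponent_in_grid_exponents intro: Jcost_cong)
  moreover have "(\<lambda>\<theta>. \<Sum>i<n. K i / round_up Tmin \<theta> (t i) + H i * round_up Tmin \<theta> (t i))
      \<in> borel_measurable borel"
  proof (intro borel_measurable_sum)
    fix i assume "i \<in> {..<n}"
    then have [measurable]: "(\<lambda>\<theta>. round_up Tmin \<theta> (t i)) \<in> borel_measurable borel"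
      using borel_measurable_round_up[OF assms(1) t] by simp
    show "(\<lambda>\<theta>. K i / round_up Tmin \<theta> (t i) + H i * round_up Tmin \<theta> (t i))
        \<in> borel_measurable borel"
      by measurable
  qed
  ultimately show ?thesis unfolding Fcost_def J by measurable
qed

lemma has_integral_powr_affine:
  fixes f :: "real \<Rightarrow> real"
  assumes "p \<le> q" and "s \<noteq> 0" and "0 < b" and "b \<noteq> 1"
    and f: "\<And>\<theta>. \<theta> \<in> {p<..<q} \<Longrightarrow> f \<theta> = b powr (s * \<theta> + c)"
  shows "(f has_integral (b powr (s * q + c) - b powr (s * p + c)) / (s * ln b)) {p..q}"
proof -
  let ?F = "\<lambda>\<theta>. b powr (s * \<theta> + c) / (s * ln b)"
  have "(f has_integral (?F q - ?F p)) {p..q}"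
  proof (rule fundamental_theorem_of_calculus_interior[OF assms(1)])
    show "continuous_on {p..q} ?F"
      using assms(2-4) by (intro continuous_intros) auto
    fix \<theta> assume "\<theta> \<in> {p<..<q}"
    have "(?F has_real_derivative b powr (s * \<theta> + c)) (at \<theta>)"
      using assms(2-4) by (auto intro!: derivative_eq_intros)
    then show "(?F has_vector_derivative f \<theta>) (at \<theta>)"
      using f[OF \<open>\<theta> \<in> {p<..<q}\<close>] by (simp add: has_real_derivative_iff_has_vector_derivative)
  qed
  then show ?thesis by (simp add: diff_divide_distrib)
qed

lemma has_integral_periodic_shift:
  fixes f :: "real \<Rightarrow> 'a::banach"
  assumes periodic: "\<And>x. f (x + p) = f x"
    and f: "(f has_integral I) {a..a + p}" and "a \<le> b" and "b \<le> a + p"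
  shows "(f has_integral I) {b..b + p}"
proof -
  have "f integrable_on {a..b}" and "f integrable_on {b..a + p}"
    using f assms(3,4) by (auto intro: integrable_subinterval_real)
  moreover have "integral {a..b} f + integral {b..a + p} f = I"
    using Henstock_Kurzweil_Integration.integral_combine[OF assms(3,4) has_integral_integrable[OF f]]
      integral_unique[OF f]
    by simp
  moreover have "f \<circ> (+) p = f" using periodic by (simp add: fun_eq_iff add.commute)
  ultimately have "(f has_integral integral {b..a + p} f) {b..a + p}"
    and "(f has_integral integral {a..b} f) {a + p..b + p}"
    using has_integral_shift_Icc_real[of f p "integral {a..b} f" a b] by auto
  then have "(f has_integral integral {b..a + p} f + integral {a..b} f) {b..b + p}"
    using assms(3,4) by (intro has_integral_combine) auto
  then show ?thesis
    using \<open>integral {a..b} f + integral {b..a + p} f = I\<close> by (simp add: add.commute)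
qed

lemma overshoot_factor_has_integral:
  "((\<lambda>\<theta>. 2 powr (next_exponent (u - \<theta>) - (u - \<theta>))) has_integral 5 / (6 * ln 2)) {0..1}"
proof -
  let ?h = "\<lambda>\<theta>. 2 powr (next_exponent (u - \<theta>) - (u - \<theta>))"
  define k where "k = \<lfloor>u\<rfloor>"
  define v where "v = u - real_of_int k"
  have v: "0 \<le> v" "v < 1" unfolding v_def k_def by linarith+
  \<comment> \<open>?h is 1-periodic, and on the period [v - 1, v] it consists of just two exponential pieces.\<close>
  have "?h \<theta> = 2 powr (1 * \<theta> + (1 - v))" if "\<theta> \<in> {v - 1<..<v - mid_exponent}" for \<theta>
    using that next_exponent_eq_int[of "k + 1" "u - \<theta>"] unfolding v_def
    by (simp add: algebra_simps)
  then have "(?h has_integral (2 powr (1 - mid_exponent) - 2 powr 0) / ln 2)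
      {v - 1..v - mid_exponent}"
    using has_integral_powr_affine[of "v - 1" "v - mid_exponent" 1 2 ?h "1 - v"] mid_exponent_lt_1
    by simp
  moreover have "?h \<theta> = 2 powr (1 * \<theta> + (mid_exponent - v))"
    if "\<theta> \<in> {v - mid_exponent<..<v}" for \<theta>
    using that next_exponent_eq_shifted[of k "u - \<theta>"] unfolding v_def
    by (simp add: algebra_simps)
  then have "(?h has_integral (2 powr mid_exponent - 2 powr 0) / ln 2) {v - mid_exponent..v}"
    using has_integral_powr_affine[of "v - mid_exponent" v 1 2 ?h "mid_exponent - v"]
      mid_exponent_gt_0
    by simp
  ultimately have "(?h has_integral (4/3 - 1) / ln 2 + (3/2 - 1) / ln 2) {v - 1..v}"
    using mid_exponent_gt_0 mid_exponent_lt_1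
    by (intro has_integral_combine) (auto simp: powr_mid_exponent powr_1_minus_mid_exponent)
  then have "(?h has_integral 5 / (6 * ln 2)) {(v - 1)..(v - 1) + 1}"
    by (simp add: field_simps)
  moreover have "?h (\<theta> + 1) = ?h \<theta>" for \<theta>
    using next_exponent_minus_1[of "u - \<theta>"]
    by (simp add: diff_diff_eq[symmetric], simp add: algebra_simps)
  ultimately show ?thesis using has_integral_periodic_shift[of ?h 1 _ "v - 1" 0] v by simp
qed

lemma round_up_has_integral:
  assumes "0 < Tmin" and "0 < t"
  shows "((\<lambda>\<theta>. round_up Tmin \<theta> t) has_integral 5 / (6 * ln 2) * t) {0..1}"
  using has_integral_mult_right[OF overshoot_factor_has_integral, of t "log 2 (t / Tmin)"]
  by (simp add: round_up_eq_overshoot[OF assms] mult.commute)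

definition joint_rate :: "real \<Rightarrow> real" where
  "joint_rate \<theta> = (if \<theta> \<le> 1 - mid_exponent then 4/3 else 2) * 2 powr (- \<theta>)"

lemma joint_rate_has_integral: "(joint_rate has_integral 5 / (6 * ln 2)) {0..1}"
proof -
  have "joint_rate \<theta> = 2 powr (-1 * \<theta> + (1 - mid_exponent))"
    if "\<theta> \<in> {0<..<1 - mid_exponent}" for \<theta>
    using that by (subst powr_add) (simp add: joint_rate_def powr_1_minus_mid_exponent)
  then have "(joint_rate has_integral (2 powr 0 - 2 powr (1 - mid_exponent)) / (-1 * ln 2))
      {0..1 - mid_exponent}"
    using has_integral_powr_affine[of 0 "1 - mid_exponent" "-1" 2 joint_rate "1 - mid_exponent"]
      mid_exponent_lt_1
    by simp
  moreover have "joint_rate \<theta> = 2 powr (-1 * \<theta> + 1)" if "\<theta> \<in> {1 - mid_exponent<..<1}" for \<theta>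
    using that by (subst powr_add) (simp add: joint_rate_def)
  then have "(joint_rate has_integral (2 powr 0 - 2 powr mid_exponent) / (-1 * ln 2))
      {1 - mid_exponent..1}"
    using has_integral_powr_affine[of "1 - mid_exponent" 1 "-1" 2 joint_rate 1] mid_exponent_gt_0
    by simp
  ultimately have "(joint_rate has_integral (1 - 4/3) / (-1 * ln 2) + (1 - 3/2) / (-1 * ln 2))
      {0..1}"
    using mid_exponent_gt_0 mid_exponent_lt_1
    by (intro has_integral_combine) (auto simp: powr_mid_exponent powr_1_minus_mid_exponent)
  then show ?thesis by (simp add: field_simps)
qed

lemma powr_grid_exponent_nat_multiple:
  assumes "y \<in> grid_exponents" and "-\<theta> < y" and "\<theta> \<le> 1"
  shows "\<exists>m::nat. 2 powr y = real m
    \<or> 2 powr y = real m * (if \<theta> \<le> 1 - mid_exponent then 3/2 else 3/4)"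
proof -
  have pow2: "2 powr real_of_int j = real ((2::nat) ^ nat j)" if "0 \<le> j" for j :: int
    using that by (simp add: powr_int)
  consider p where "y = real_of_int p" | p where "y = real_of_int p + mid_exponent"
    using assms(1) unfolding grid_exponents_def by blast
  then show ?thesis
  proof cases
    case 1
    then have "0 \<le> p" using assms(2,3) by linarith
    then show ?thesis using pow2 unfolding 1 by blast
  next
    case 2
    show ?thesis
    proof (cases "\<theta> \<le> 1 - mid_exponent")
      case True
      then have "0 \<le> p" using assms(2) unfolding 2 by linarith
      then show ?thesis
        using True pow2[of p] unfolding 2 by (auto simp: powr_add powr_mid_exponent)
    next
      case False
      have "0 \<le> p + 1" using assms(2,3) mid_exponent_lt_1 unfolding 2 by linarith
      moreover have "2 powr y = 2 powr real_of_int (p + 1) * 2 powr (mid_exponent - 1)"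
        unfolding 2 by (simp flip: powr_add)
      ultimately show ?thesis using False pow2[of "p + 1"]
        by (auto simp: powr_diff powr_mid_exponent)
    qed
  qed
qed

lemma Jcost_round_up_le:
  assumes "0 < Tmin" and t: "\<And>i. i < n \<Longrightarrow> Tmin \<le> t i" and "0 \<le> K0"
    and "0 \<le> \<theta>" and "\<theta> \<le> 1"
  shows "Jcost n K0 (\<lambda>i. round_up Tmin \<theta> (t i)) \<le> K0 * joint_rate \<theta> / Tmin"
proof -
  define A where "A = Tmin * 2 powr \<theta>"
  define c :: real where "c = (if \<theta> \<le> 1 - mid_exponent then 3/2 else 3/4)"
  have A: "0 < A" unfolding A_def using assms(1) by simp
  have "\<exists>m::nat. round_up Tmin \<theta> (t i) = real m * A \<or> round_up Tmin \<theta> (t i) = real m * (c * A)"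
    if i: "i < n" for i
  proof -
    define y where "y = next_exponent (log 2 (t i / Tmin) - \<theta>)"
    have "round_up Tmin \<theta> (t i) = A * 2 powr y"
      using round_up_eq[of Tmin "t i" \<theta>] assms(1) t[OF i] unfolding A_def y_def
      by (simp add: powr_add)
    moreover have "0 \<le> log 2 (t i / Tmin)" using assms(1) t[OF i] by simp
    then have "-\<theta> < y"
      using next_exponent_gt[of "log 2 (t i / Tmin) - \<theta>"] unfolding y_def by linarith
    ultimately show ?thesis
      using powr_grid_exponent_nat_multiple[of y \<theta>] next_exponent_in_grid_exponents assms(5)
      unfolding c_def y_def by (auto simp: ac_simps)
  qed
  then have "Jcost n K0 (\<lambda>i. round_up Tmin \<theta> (t i))
      \<le> K0 * (1/A + 1/(c * A) - 1/(real (3::nat) * A))"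
    using A assms(3)
    by (intro Jcost_le_two_lattices[where s = "if \<theta> \<le> 1 - mid_exponent then 2 else 4"])
      (auto simp: c_def)
  also have "\<dots> = K0 * joint_rate \<theta> / Tmin"
    using assms(1) by (simp add: A_def c_def joint_rate_def powr_minus field_simps)
  finally show ?thesis .
qed

lemma joint_rate_le_2: "0 \<le> \<theta> \<Longrightarrow> joint_rate \<theta> \<le> 2"
  using powr_mono[of "-\<theta>" 0 2] unfolding joint_rate_def by auto

lemma Fcost_round_up_bounds:
  assumes "0 < Tmin" and t: "\<And>i. i < n \<Longrightarrow> Tmin \<le> t i" and "0 \<le> K0"
    and K: "\<And>i. i < n \<Longrightarrow> 0 \<le> K i" and H: "\<And>i. i < n \<Longrightarrow> 0 \<le> H i"
    and "0 \<le> \<theta>" and "\<theta> \<le> 1"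
  shows "0 \<le> Fcost n K0 K H (\<lambda>i. round_up Tmin \<theta> (t i))"
    and "Fcost n K0 K H (\<lambda>i. round_up Tmin \<theta> (t i))
      \<le> K0 * joint_rate \<theta> / Tmin + (\<Sum>i<n. K i / t i + H i * round_up Tmin \<theta> (t i))"
proof -
  have t_pos: "0 < t i" and round_gt: "t i < round_up Tmin \<theta> (t i)" if "i < n" for i
    using t[OF that] assms(1) round_up_gt[of Tmin "t i" \<theta>] by auto
  have "K i / round_up Tmin \<theta> (t i) \<le> K i / t i" if "i < n" for i
    using K[OF that] t_pos[OF that] round_gt[OF that] by (intro divide_left_mono) auto
  then show "Fcost n K0 K H (\<lambda>i. round_up Tmin \<theta> (t i))
      \<le> K0 * joint_rate \<theta> / Tmin + (\<Sum>i<n. K i / t i + H i * round_up Tmin \<theta> (t i))"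
    unfolding Fcost_def using Jcost_round_up_le[OF assms(1) t assms(3,6,7)]
    by (intro add_mono sum_mono) auto
  have "0 \<le> K i / round_up Tmin \<theta> (t i) + H i * round_up Tmin \<theta> (t i)" if "i < n" for i
    using K[OF that] H[OF that] t_pos[OF that] round_gt[OF that] by simp
  then show "0 \<le> Fcost n K0 K H (\<lambda>i. round_up Tmin \<theta> (t i))"
    unfolding Fcost_def by (rule add_nonneg_nonneg[OF Jcost_nonneg[OF assms(3)] sum_nonneg]) auto
qed

lemma bounded_unit_interval_integrals:
  fixes f :: "real \<Rightarrow> real"
  assumes f: "f \<in> borel_measurable borel" and bounded: "\<And>x. x \<in> {0..1} \<Longrightarrow> \<bar>f x\<bar> \<le> B"
  shows "integrable (uniform_measure lborel {0..1::real}) f"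
    and "f integrable_on {0..1}"
    and "(\<integral>x. f x \<partial>uniform_measure lborel {0..1::real}) = integral {0..1} f"
proof -
  have U: "uniform_measure lborel {0..1::real}
      = density lborel (\<lambda>x. ennreal (indicator {0..1} x))"
    unfolding uniform_measure_def by (simp add: ennreal_indicator divide_ennreal_def)
  have f': "f \<in> borel_measurable lborel" using f by simp
  have si: "set_integrable lborel {0..1::real} f"
    unfolding set_integrable_def
  proof (rule integrableI_bounded_set[where A = "{0..1}" and B = B])
    show "(\<lambda>x. indicat_real {0..1} x *\<^sub>R f x) \<in> borel_measurable lborel" using f' by measurable
    show "AE x in lborel. x \<in> {0..1} \<longrightarrow> norm (indicat_real {0..1} x *\<^sub>R f x) \<le> B"
      using bounded by (auto simp: indicator_def)
  qed auto
  then show "integrable (uniform_measure lborel {0..1::real}) f"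
    unfolding U set_integrable_def using f' by (subst integrable_density) auto
  show "f integrable_on {0..1}" using set_borel_integral_eq_integral(1)[OF si] .
  have "(\<integral>x. f x \<partial>uniform_measure lborel {0..1::real})
      = (\<integral>x. indicat_real {0..1} x *\<^sub>R f x \<partial>lborel)"
    unfolding U using f' by (subst integral_density) auto
  also have "\<dots> = integral {0..1} f"
    using set_borel_integral_eq_integral(2)[OF si] unfolding set_lebesgue_integral_def .
  finally show "(\<integral>x. f x \<partial>uniform_measure lborel {0..1::real}) = integral {0..1} f" .
qed

lemma expected_Fcost_round_up_le:
  assumes "0 < Tmin" and t: "\<And>i. i < n \<Longrightarrow> Tmin \<le> t i" and "0 \<le> K0"
    and K: "\<And>i. i < n \<Longrightarrow> 0 \<le> K i" and H: "\<And>i. i < n \<Longrightarrow> 0 \<le> H i"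
  shows "integrable (uniform_measure lborel {0..1::real})
      (\<lambda>\<theta>. Fcost n K0 K H (\<lambda>i. round_up Tmin \<theta> (t i)))"
    and "(\<integral>\<theta>. Fcost n K0 K H (\<lambda>i. round_up Tmin \<theta> (t i)) \<partial>uniform_measure lborel {0..1::real})
      \<le> 5 / (6 * ln 2) * (K0 / Tmin + (\<Sum>i<n. H i * t i)) + (\<Sum>i<n. K i / t i)"
proof -
  define c :: real where "c = 5 / (6 * ln 2)"
  let ?F = "\<lambda>\<theta>. Fcost n K0 K H (\<lambda>i. round_up Tmin \<theta> (t i))"
  let ?G = "\<lambda>\<theta>. K0 * joint_rate \<theta> / Tmin + (\<Sum>i<n. K i / t i + H i * round_up Tmin \<theta> (t i))"
  have bounds: "0 \<le> ?F \<theta>" "?F \<theta> \<le> ?G \<theta>" if "\<theta> \<in> {0..1}" for \<theta>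
    using Fcost_round_up_bounds[of Tmin n t K0 K H \<theta>] assms that by auto
  have t_pos: "0 < t i" if "i < n" for i using t[OF that] assms(1) by simp
  then have t_nonneg: "0 \<le> t i" if "i < n" for i using that less_imp_le by blast
  have "\<bar>?F \<theta>\<bar> \<le> K0 * 2 / Tmin + (\<Sum>i<n. K i / t i + H i * (2 * t i))" if "\<theta> \<in> {0..1}" for \<theta>
  proof -
    have "?G \<theta> \<le> K0 * 2 / Tmin + (\<Sum>i<n. K i / t i + H i * (2 * t i))"
      using joint_rate_le_2[of \<theta>] that assms(1,3) H t_nonneg
        round_up_le_double[OF assms(1) t_pos]
      by (intro add_mono sum_mono divide_right_mono mult_left_mono) auto
    then show ?thesis using bounds[OF that] by simp
  qed
  note F = bounded_unit_interval_integrals[OF borel_measurable_Fcost_round_up[OF assms(1) t_pos]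
      this]
  show "integrable (uniform_measure lborel {0..1::real}) ?F" by (rule F(1))
  have "(?G has_integral K0 * c / Tmin + (\<Sum>i<n. K i / t i + H i * (c * t i))) {0..1}"
    unfolding c_def
    by (intro has_integral_add has_integral_sum has_integral_divide has_integral_mult_right
        joint_rate_has_integral round_up_has_integral[OF assms(1) t_pos])
      (auto intro: has_integral_const_real[of _ 0 1, simplified])
  then have "integral {0..1} ?F \<le> K0 * c / Tmin + (\<Sum>i<n. K i / t i + H i * (c * t i))"
    using bounds(2) by (intro has_integral_le[OF integrable_integral[OF F(2)]]) auto
  also have "\<dots> = c * (K0 / Tmin + (\<Sum>i<n. H i * t i)) + (\<Sum>i<n. K i / t i)"
    by (simp add: sum.distrib sum_distrib_left algebra_simps)
  finally show "(\<integral>\<theta>. ?F \<theta> \<partial>uniform_measure lborel {0..1::real})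
      \<le> 5 / (6 * ln 2) * (K0 / Tmin + (\<Sum>i<n. H i * t i)) + (\<Sum>i<n. K i / t i)"
    using F(3) unfolding c_def by simp
qed

lemma resource_feasible_round_up:
  assumes "P_feasible n D \<alpha> Tmin T" and "\<And>i d. i < n \<Longrightarrow> d < D \<Longrightarrow> 0 \<le> \<alpha> i d"
  shows "resource_feasible n D \<alpha> (\<lambda>i. round_up Tmin \<theta> (T i))"
proof -
  have T: "0 < T i" "T i < round_up Tmin \<theta> (T i)" if "i < n" for i
    using assms(1) that round_up_gt[of Tmin "T i" \<theta>] unfolding P_feasible_def by force+
  have "(\<Sum>i<n. \<alpha> i d / round_up Tmin \<theta> (T i)) \<le> (\<Sum>i<n. \<alpha> i d / T i)" if "d < D" for d
    using assms(2) T that by (intro sum_mono frac_le) (auto intro: less_imp_le)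
  also have "(\<Sum>i<n. \<alpha> i d / T i) \<le> 1" if "d < D" for d
    using assms(1) that unfolding P_feasible_def by blast
  finally show ?thesis using T unfolding resource_feasible_def by force
qed

lemma OPT_P_eq_P_obj:
  "P_optimal n D K0 K H \<alpha> Tmin T \<Longrightarrow> OPT_P n D K0 K H \<alpha> = P_obj n K0 K H Tmin T"
  unfolding OPT_P_def P_optimal_def by (rule cInf_eq_minimum) auto

lemma ln_2_le_5_6: "ln 2 \<le> (5/6 :: real)"
proof -
  have "ln (2::real) = ln ((4/3) * (3/2))" by simp
  also have "\<dots> = ln (4/3) + ln (3/2)" by (rule ln_mult_pos) simp_all
  also have "\<dots> \<le> (4/3 - 1) + (3/2 - 1)" by (intro add_mono ln_le_minus_one) auto
  finally show ?thesis by simp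
qed

theorem lemma4p2:
  fixes n D :: nat and K0 :: real and K H :: "nat \<Rightarrow> real"
    and \<alpha> :: "nat \<Rightarrow> nat \<Rightarrow> real" and Tmin :: real and Tstar :: "nat \<Rightarrow> real"
  assumes "n \<ge> 1" and "D \<ge> 1" and "K0 > 0"
    and "\<And>i. i < n \<Longrightarrow> K i > 0" and "\<And>i. i < n \<Longrightarrow> H i > 0"
    and "\<And>i d. i < n \<Longrightarrow> d < D \<Longrightarrow> \<alpha> i d \<ge> 0"
    and opt: "P_optimal n D K0 K H \<alpha> Tmin Tstar"
  shows "(AE \<theta> in uniform_measure lborel {0..1::real}.
            resource_feasible n D \<alpha> (\<lambda>i. round_up Tmin \<theta> (Tstar i)))
       \<and> integrable (uniform_measure lborel {0..1::real})
            (\<lambda>\<theta>. Fcost n K0 K H (\<lambda>i. round_up Tmin \<theta> (Tstar i)))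
       \<and> (\<integral>\<theta>. Fcost n K0 K H (\<lambda>i. round_up Tmin \<theta> (Tstar i))
              \<partial>uniform_measure lborel {0..1::real})
           \<le> 5 / (6 * ln 2) * OPT_P n D K0 K H \<alpha>"
proof -
  have feasible: "P_feasible n D \<alpha> Tmin Tstar" using opt unfolding P_optimal_def by simp
  then have "0 < Tmin" and Tstar: "\<And>i. i < n \<Longrightarrow> Tmin \<le> Tstar i"
    unfolding P_feasible_def by auto
  have K: "0 \<le> K i" and H: "0 \<le> H i" if "i < n" for i
    using assms(4,5) that by (auto intro: less_imp_le)
  have K0: "0 \<le> K0" using assms(3) by simp
  note expected = expected_Fcost_round_up_le[of Tmin n Tstar K0 K H, OF \<open>0 < Tmin\<close> Tstar K0 K H]
  have c: "1 \<le> 5 / (6 * ln (2::real))" using ln_2_le_5_6 by (simp add: field_simps)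
  have "0 \<le> (\<Sum>i<n. K i / Tstar i)"
    using K Tstar \<open>0 < Tmin\<close>
    by (intro sum_nonneg divide_nonneg_nonneg) (auto intro: order_trans[of 0 Tmin])
  then have "(\<Sum>i<n. K i / Tstar i) \<le> 5 / (6 * ln 2) * (\<Sum>i<n. K i / Tstar i)"
    using mult_right_mono[OF c] by simp
  then have "5 / (6 * ln 2) * (K0 / Tmin + (\<Sum>i<n. H i * Tstar i)) + (\<Sum>i<n. K i / Tstar i)
      \<le> 5 / (6 * ln 2) * OPT_P n D K0 K H \<alpha>"
    unfolding OPT_P_eq_P_obj[OF opt] P_obj_def sum.distrib distrib_left by linarith
  moreover have "AE \<theta> in uniform_measure lborel {0..1::real}.
      resource_feasible n D \<alpha> (\<lambda>i. round_up Tmin \<theta> (Tstar i))"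
    by (rule AE_I2, rule resource_feasible_round_up[OF feasible assms(6)])
  ultimately show ?thesis using expected order_trans by blast
qed

end
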